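(* Let $\mathcal F\subseteq\binom{[n]}{k}$ be a left-compressed $t$-intersecting family, let $g(\mathcal F)\in G_*(\mathcal F)$ and $s=s^+(g(\mathcal F))$. Suppose $g^*_i(\mathcal F)\ne\emptyset$, let $j=s+t-i\ne i$, and let $\mathcal F_1=\mathcal F\cup\mathscr D(g^*_i(\mathcal F)')\setminus\mathscr D(g^*_j(\mathcal F))$. Then \begin{align*} \zeta_{k-1}(\mathcal F_1)-\zeta_{k-1}(\mathcal F)\ \ge\ & |g^*_i(\mathcal F)|\binom{n-s}{k-i}\binom{n-s-k+i}{2}+\zeta_{i-1,s}(g^*_i(\mathcal F),\mathcal F|_{[s]})\binom{n-s}{k-i+1}\\ &+|g^*_i(\mathcal F)|(s-i+1)(k-i+1)\binom{n-s}{k-i+1}-|g^*_j(\mathcal F)|\binom{n-s}{k-j-1}\binom{n-s-k+j+1}{2}\\ &-\zeta_{j-1,s}(g^*_j(\mathcal F),\mathcal F|_{[s]})\binom{n-s}{k-j}-|g^*_j(\mathcal F)|(s-j)(k-j+1)\binom{n-s}{k-j}. \end{align*}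
   Context: $[m]=\{1,\dots,m\}$, $[a,b]=\{a,\dots,b\}$. A family is $t$-intersecting if any two members share at least $t$ elements; left-compressed means invariant under all shifts $\Delta_{ij}$, $1\le i<j\le n$, where $\delta_{ij}(A)=(A\setminus\{j\})\cup\{i\}$ if $j\in A$, $i\notin A$, $(A\setminus\{j\})\cup\{i\}\notin\mathcal F$, else $\delta_{ij}(A)=A$, and $\Delta_{ij}(\mathcal F)=\{\delta_{ij}(A):A\in\mathcal F\}$. Generating sets: for $E\subseteq[n]$, $\mathcal U(E)=\{A\subseteq[n]:E\subseteq A\}$, $s^+(E)=\max E$; for a family $\mathcal E$, $\mathcal U(\mathcal E)=\bigcup_{E\in\mathcal E}\mathcal U(E)$ and $s^+(\mathcal E)=\max_{E\in\mathcal E}s^+(E)$. A family $g(\mathcal F)\subseteq\bigcup_{i\le k}\binom{[n]}{i}$ is a generating set of $\mathcal F$ if $\mathcal U(g(\mathcal F))\cap\binom{[n]}{k}=\mathcal F$; $G(\mathcal F)$ is the set of all generating sets. Let $s=\min\{s^+(g):g\in G(\mathcal F)\}$, and $G_*(\mathcal F)$ the set of $g\in G(\mathcal F)$ such that $g$ equals its set of inclusion-minimal elements (an antichain) and $s^+(g)=s$. Put $\mathcal F|_{[s]}=\{F\cap[s]:F\in\mathcal F\}$. For $g(\mathcal F)\in G_*(\mathcal F)$: $g^*(\mathcal F)=\{E\in g(\mathcal F):s\in E\}$, $g^*_i(\mathcal F)=\{E\in g^*(\mathcal F):|E|=i\}$, $g^*_i(\mathcal F)'=\{E\setminus\{s\}:E\in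 g^*_i(\mathcal F)\}$. For $E\subseteq[n]$, $\mathscr D(E)=\{B\in\binom{[n]}{k}: B\cap[s^+(E)]=E\}$, and $\mathscr D(\mathcal E)=\bigcup_{E\in\mathcal E}\mathscr D(E)$. For families $\mathcal F,\mathcal G\subseteq 2^{[n]}$ and integers $u,v$: $\zeta_u(\mathcal F,\mathcal G)$ is the number of unordered pairs $\{F,G\}$ with $F\in\mathcal F$, $G\in\mathcal G$, $|F|=|G|=u+1$, $|F\cap G|=u$; $\zeta_{u,v}(\mathcal F,\mathcal G)$ counts those pairs with additionally $v\in F\cap G$; $\zeta_u(\mathcal F)=\zeta_u(\mathcal F,\mathcal F)$. In particular $\zeta_{k-1}(\mathcal F)$ is the number of unordered pairs of members of $\mathcal F$ meeting in $k-1$ elements. *)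

theory Defs
  imports Main
begin

definition kfam :: "nat \<Rightarrow> nat \<Rightarrow> nat set set" where
  "kfam n k = {A. A \<subseteq> {1..n} \<and> card A = k}"

definition t_intersecting :: "nat \<Rightarrow> nat set set \<Rightarrow> bool" where
  "t_intersecting t F \<longleftrightarrow> (\<forall>A\<in>F. \<forall>B\<in>F. t \<le> card (A \<inter> B))"

definition shift_set :: "nat \<Rightarrow> nat \<Rightarrow> nat set set \<Rightarrow> nat set \<Rightarrow> nat set" where
  "shift_set i j F A =
     (if j \<in> A \<and> i \<notin> A \<and> (A - {j}) \<union> {i} \<notin> F then (A - {j}) \<union> {i} else A)"

definition shift_fam :: "nat \<Rightarrow> nat \<Rightarrow> nat set set \<Rightarrow> nat set set" where
  "shift_fam i j F = shift_set i j F ` F"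

definition left_compressed :: "nat \<Rightarrow> nat set set \<Rightarrow> bool" where
  "left_compressed n F \<longleftrightarrow> (\<forall>i j. 1 \<le> i \<and> i < j \<and> j \<le> n \<longrightarrow> shift_fam i j F = F)"

definition upset :: "nat \<Rightarrow> nat set \<Rightarrow> nat set set" where
  "upset n E = {A. A \<subseteq> {1..n} \<and> E \<subseteq> A}"

definition upset_fam :: "nat \<Rightarrow> nat set set \<Rightarrow> nat set set" where
  "upset_fam n \<E> = (\<Union>E\<in>\<E>. upset n E)"

definition splus :: "nat set \<Rightarrow> nat" where
  "splus E = (if E = {} then 0 else Max E)"

definition splus_fam :: "nat set set \<Rightarrow> nat" where
  "splus_fam \<E> = (if \<E> = {} then 0 else Max (splus ` \<E>))"

definition gen_sets :: "nat \<Rightarrow> nat \<Rightarrow> nat set set \<Rightarrow> nat set set set" where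
  "gen_sets n k F = {g. g \<subseteq> {E. E \<subseteq> {1..n} \<and> card E \<le> k} \<and> upset_fam n g \<inter> kfam n k = F}"

definition s_min :: "nat \<Rightarrow> nat \<Rightarrow> nat set set \<Rightarrow> nat" where
  "s_min n k F = (LEAST m. \<exists>g\<in>gen_sets n k F. splus_fam g = m)"

definition minimal_elems :: "nat set set \<Rightarrow> nat set set" where
  "minimal_elems g = {E\<in>g. \<forall>E'\<in>g. E' \<subseteq> E \<longrightarrow> E' = E}"

definition gen_sets_star :: "nat \<Rightarrow> nat \<Rightarrow> nat set set \<Rightarrow> nat set set set" where
  "gen_sets_star n k F =
     {g\<in>gen_sets n k F. g = minimal_elems g \<and> splus_fam g = s_min n k F}"

definition restrict_fam :: "nat set set \<Rightarrow> nat \<Rightarrow> nat set set" where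
  "restrict_fam F s = (\<lambda>A. A \<inter> {1..s}) ` F"

definition gstar_i :: "nat set set \<Rightarrow> nat \<Rightarrow> nat \<Rightarrow> nat set set" where
  "gstar_i g s i = {E\<in>g. s \<in> E \<and> card E = i}"

definition gstar_i' :: "nat set set \<Rightarrow> nat \<Rightarrow> nat \<Rightarrow> nat set set" where
  "gstar_i' g s i = (\<lambda>E. E - {s}) ` gstar_i g s i"

definition Dset :: "nat \<Rightarrow> nat \<Rightarrow> nat set \<Rightarrow> nat set set" where
  "Dset n k E = {B\<in>kfam n k. B \<inter> {1..splus E} = E}"

definition Dfam :: "nat \<Rightarrow> nat \<Rightarrow> nat set set \<Rightarrow> nat set set" where
  "Dfam n k \<E> = (\<Union>E\<in>\<E>. Dset n k E)"

definition zeta :: "nat \<Rightarrow> nat set set \<Rightarrow> nat set set \<Rightarrow> nat" where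
  "zeta u F G = card {{A, B} | A B. A \<in> F \<and> B \<in> G \<and> card A = u + 1 \<and> card B = u + 1
                                    \<and> card (A \<inter> B) = u}"

definition zeta_v :: "nat \<Rightarrow> nat \<Rightarrow> nat set set \<Rightarrow> nat set set \<Rightarrow> nat" where
  "zeta_v u v F G = card {{A, B} | A B. A \<in> F \<and> B \<in> G \<and> card A = u + 1 \<and> card B = u + 1
                                    \<and> card (A \<inter> B) = u \<and> v \<in> A \<inter> B}"

definition ibinom :: "int \<Rightarrow> int \<Rightarrow> int" where
  "ibinom a b = (if a < 0 \<or> b < 0 then 0 else int (nat a choose nat b))"

end

theory Submission
  imports Defs
begin

text \<open>Write every \<open>k\<close>-set as its trace on \<open>{1..s}\<close> together with its tail in \<open>{s<..n}\<close>.
  The sets \<open>(E - {s}) \<union> R\<close> with \<open>E \<in> gstar_i g s i\<close> and \<open>|R| = k - i + 1\<close> are new members of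
  \<open>F\<^sub>1\<close>, and each has three kinds of neighbours in \<open>F\<^sub>1\<close> (sets meeting it in \<open>k - 1\<close> points):
  another new member with the same trace and an adjacent tail; a set \<open>(Y - {s}) \<union> R\<close> with the
  same tail, where \<open>Y\<close> is a trace of \<open>F\<close> adjacent to \<open>E\<close> through \<open>s\<close>; and a set obtained by
  exchanging a tail point for a point of \<open>{1..s}\<close> outside \<open>E - {s}\<close>. Left-compression puts these
  partners into \<open>F\<^sub>1\<close>, and the three families of pairs are disjoint from each other and from the
  pairs surviving in \<open>F - Dfam n k (gstar_i g s j)\<close>, because the two traces of a pair coincide,
  differ, or differ in size. Conversely, an adjacent pair of \<open>F\<close> destroyed by removing a member
  \<open>E \<union> R\<close> of \<open>Dfam n k (gstar_i g s j)\<close> arises from \<open>E\<close> and \<open>R\<close> in one of the same three ways,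
  which bounds the loss by the corresponding counts for \<open>gstar_i g s j\<close>.\<close>

section \<open>Adjacent pairs of sets\<close>

definition adjacent_pairs :: "nat \<Rightarrow> 'a set set \<Rightarrow> 'a set set \<Rightarrow> 'a set set set" where
  "adjacent_pairs u F G = {{A, B} | A B. A \<in> F \<and> B \<in> G \<and> card A = u + 1 \<and> card B = u + 1
                                       \<and> card (A \<inter> B) = u}"

definition adjacent_pairs_at :: "'a \<Rightarrow> nat \<Rightarrow> 'a set set \<Rightarrow> 'a set set \<Rightarrow> 'a set set set" where
  "adjacent_pairs_at v u F G = {{A, B} | A B. A \<in> F \<and> B \<in> G \<and> card A = u + 1 \<and> card B = u + 1
                                       \<and> card (A \<inter> B) = u \<and> v \<in> A \<inter> B}"

lemma zeta_eq_card_adjacent_pairs: "zeta u F G = card (adjacent_pairs u F G)"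
  unfolding zeta_def adjacent_pairs_def ..

lemma zeta_v_eq_card_adjacent_pairs_at: "zeta_v u v F G = card (adjacent_pairs_at v u F G)"
  unfolding zeta_v_def adjacent_pairs_at_def ..

lemma adjacent_pairs_mono: "F \<subseteq> F' \<Longrightarrow> adjacent_pairs u F F \<subseteq> adjacent_pairs u F' F'"
  unfolding adjacent_pairs_def by blast

lemma finite_adjacent_pairs: "finite F \<Longrightarrow> finite (adjacent_pairs u F F)"
  by (rule finite_subset[of _ "Pow F"]) (auto simp: adjacent_pairs_def)

lemma adjacent_pairsI:
  "A \<in> F \<Longrightarrow> B \<in> G \<Longrightarrow> card A = u + 1 \<Longrightarrow> card B = u + 1 \<Longrightarrow> card (A \<inter> B) = u
    \<Longrightarrow> {A, B} \<in> adjacent_pairs u F G"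
  unfolding adjacent_pairs_def by blast

lemma adjacent_pairsE:
  assumes "Q \<in> adjacent_pairs u F G"
  obtains A B where "Q = {A, B}" "A \<in> F" "B \<in> G" "card A = u + 1" "card B = u + 1"
    "card (A \<inter> B) = u"
  using assms unfolding adjacent_pairs_def by blast

lemma adjacent_pairs_atE:
  assumes "Q \<in> adjacent_pairs_at v u F G"
  obtains A B where "Q = {A, B}" "A \<in> F" "B \<in> G" "card A = u + 1" "card B = u + 1"
    "card (A \<inter> B) = u" "v \<in> A" "v \<in> B"
  using assms unfolding adjacent_pairs_at_def by blast

lemma adjacent_sets_exchange:
  assumes "finite C" "finite D" "card C = card D" "card (C \<inter> D) + 1 = card C"
  obtains c y where "c \<in> C" "c \<notin> D" "y \<in> D" "y \<notin> C" "D = insert y (C - {c})"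
proof -
  have "card (C - D) = 1" "card (D - C) = 1"
    using assms card_Diff_subset_Int[of C D] card_Diff_subset_Int[of D C]
    by (simp_all add: Int_commute)
  then obtain c y where "C - D = {c}" "D - C = {y}" by (auto simp: card_1_singleton_iff)
  then have "c \<in> C" "c \<notin> D" "y \<in> D" "y \<notin> C" "D = insert y (C - {c})" by blast+
  then show ?thesis using that by blast
qed

lemma core_ends_SigmaE:
  assumes "x \<in> (SIGMA I:{I. I \<subseteq> S \<and> card I = u}. {D. D \<subseteq> S - I \<and> card D = 2})"
  obtains I a b where "x = (I, {a, b})" "I \<subseteq> S" "card I = u" "a \<noteq> b" "a \<in> S - I" "b \<in> S - I"
proof -
  obtain I D where "x = (I, D)" "I \<subseteq> S" "card I = u" "D \<subseteq> S - I" "card D = 2"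
    using assms by blast
  then show ?thesis using that by (auto simp: card_2_iff)
qed

text \<open>An adjacent pair of \<open>(u+1)\<close>-subsets of \<open>S\<close> is determined by its common \<open>u\<close>-set
  and the two further points.\<close>
lemma adjacent_subset_pairs_eq_image:
  fixes S :: "'a set"
  assumes S: "finite S"
  shows "adjacent_pairs u {R. R \<subseteq> S \<and> card R = u + 1} {R. R \<subseteq> S \<and> card R = u + 1}
    = (\<lambda>(I, D). (\<lambda>x. insert x I) ` D) `
        (SIGMA I:{I. I \<subseteq> S \<and> card I = u}. {D. D \<subseteq> S - I \<and> card D = 2})"
    (is "?pairs = ?pair ` ?cores_ends")
proof (intro equalityI subsetI)
  fix Q assume "Q \<in> ?pairs"
  then obtain R R' where Q: "Q = {R, R'}" and RR: "R \<subseteq> S" "R' \<subseteq> S" "card R = u + 1"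
    "card R' = u + 1" "card (R \<inter> R') = u"
    by (auto elim: adjacent_pairsE)
  have fin: "finite R" "finite R'" using RR S by (auto intro: finite_subset)
  obtain a b where ab: "a \<in> R" "a \<notin> R'" "b \<in> R'" "b \<notin> R" "R' = insert b (R - {a})"
    by (rule adjacent_sets_exchange[of R R']) (use RR fin in simp_all)
  have "(R \<inter> R', {a, b}) \<in> ?cores_ends" using RR ab by (auto simp: card_2_iff)
  moreover have "Q = ?pair (R \<inter> R', {a, b})" unfolding Q using ab by auto
  ultimately show "Q \<in> ?pair ` ?cores_ends" by (rule rev_image_eqI)
next
  fix Q assume "Q \<in> ?pair ` ?cores_ends"
  then obtain x where x: "x \<in> ?cores_ends" "Q = ?pair x" by blast
  obtain I a b where "x = (I, {a, b})" and I: "I \<subseteq> S" "card I = u"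
    and ab: "a \<noteq> b" "a \<in> S - I" "b \<in> S - I"
    using x(1) by (rule core_ends_SigmaE)
  then have Q: "Q = {insert a I, insert b I}" using x by simp
  have "finite I" using I S by (auto intro: finite_subset)
  moreover have "insert a I \<inter> insert b I = I" using ab by auto
  ultimately show "Q \<in> ?pairs" unfolding Q using I ab by (intro adjacent_pairsI) auto
qed

lemma card_adjacent_subset_pairs:
  fixes S :: "'a set"
  assumes S: "finite S"
  shows "card (adjacent_pairs u {R. R \<subseteq> S \<and> card R = u + 1} {R. R \<subseteq> S \<and> card R = u + 1})
       = (card S choose u) * ((card S - u) choose 2)"
proof -
  define cores_ends
    where "cores_ends = (SIGMA I:{I. I \<subseteq> S \<and> card I = u}. {D. D \<subseteq> S - I \<and> card D = 2})"
  have "inj_on (\<lambda>(I, D). (\<lambda>x. insert x I) ` D) cores_ends"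
  proof (rule inj_on_inverseI[where g = "\<lambda>Q. (\<Inter>Q, \<Union>Q - \<Inter>Q)"])
    fix x assume "x \<in> cores_ends"
    then obtain I a b where "x = (I, {a, b})" "a \<noteq> b" "a \<notin> I" "b \<notin> I"
      unfolding cores_ends_def by (rule core_ends_SigmaE) blast
    then show "(\<lambda>Q. (\<Inter>Q, \<Union>Q - \<Inter>Q)) ((\<lambda>(I, D). (\<lambda>x. insert x I) ` D) x) = x" by auto
  qed
  moreover have "card {D. D \<subseteq> S - I \<and> card D = 2} = (card S - u) choose 2"
    if "I \<subseteq> S" "card I = u" for I
    using that S n_subsets[of "S - I" 2] by (auto simp: card_Diff_subset finite_subset)
  then have "card cores_ends = (card S choose u) * ((card S - u) choose 2)"
    unfolding cores_ends_def using S n_subsets[OF S] by simp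
  ultimately show ?thesis
    unfolding adjacent_subset_pairs_eq_image[OF S] cores_ends_def[symmetric]
    by (simp add: card_image)
qed

lemma ibinom_of_nat: "ibinom (int a) (int b) = int (a choose b)"
  unfolding ibinom_def by simp

lemma ibinom_diff_two: "ibinom (int a - int b) 2 = int ((a - b) choose 2)"
  unfolding ibinom_def by (cases "b \<le> a") (auto simp: nat_diff_distrib)

section \<open>Families generated inside \<open>{1..s}\<close>\<close>

lemma mem_le_splus_fam:
  assumes "finite g" "G \<in> g" "finite G" "x \<in> G"
  shows "x \<le> splus_fam g"
proof -
  have "x \<le> splus G" using assms(3,4) unfolding splus_def by auto
  also have "splus G \<le> splus_fam g" using assms(1,2) unfolding splus_fam_def by auto
  finally show ?thesis .
qed

lemma splus_fam_le:
  assumes "finite g" "\<And>G. G \<in> g \<Longrightarrow> G \<subseteq> {1..n}"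
  shows "splus_fam g \<le> n"
proof -
  have "splus G \<le> n" if "G \<in> g" for G
    using assms(2)[OF that] finite_subset[OF assms(2)[OF that]] unfolding splus_def
    by (auto intro: order.trans[OF Max.boundedI])
  then show ?thesis using assms(1) unfolding splus_fam_def by auto
qed

lemma Int_atLeastAtMost_splus:
  assumes "finite T" "0 \<notin> T" "\<And>x. x \<in> R \<Longrightarrow> splus T < x"
  shows "(T \<union> R) \<inter> {1..splus T} = T"
proof -
  have "T \<subseteq> {1..splus T}"
    using assms(1,2) unfolding splus_def by (auto simp: Suc_le_eq gr0I)
  moreover have "R \<inter> {1..splus T} = {}" using assms(3) by fastforce
  ultimately show ?thesis by blast
qed

lemma finite_kfam: "finite (kfam n k)"
  by (rule finite_subset[of _ "Pow {1..n}"]) (auto simp: kfam_def)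

locale generated_family =
  fixes n k s :: nat and F g :: "nat set set"
  assumes family_uniform: "F \<subseteq> kfam n k"
    and generates: "upset_fam n g \<inter> kfam n k = F"
    and generator_bounds: "\<And>G. G \<in> g \<Longrightarrow> G \<subseteq> {1..s} \<and> card G \<le> k"
    and generators_antichain: "\<And>G G'. G \<in> g \<Longrightarrow> G' \<in> g \<Longrightarrow> G' \<subseteq> G \<Longrightarrow> G' = G"
    and compressed: "left_compressed n F"
    and s_le_n: "s \<le> n"
begin

lemma memberD: "B \<in> F \<Longrightarrow> B \<subseteq> {1..n} \<and> card B = k"
  using family_uniform unfolding kfam_def by blast

lemma finite_family: "finite F"
  using family_uniform finite_kfam by (rule finite_subset)

lemma mem_if_generator_subset: "B \<subseteq> {1..n} \<Longrightarrow> card B = k \<Longrightarrow> G \<in> g \<Longrightarrow> G \<subseteq> B \<Longrightarrow> B \<in> F"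
  using generates unfolding upset_fam_def upset_def kfam_def by blast

lemma generator_in_trace:
  assumes "B \<in> F"
  obtains G where "G \<in> g" "G \<subseteq> B \<inter> {1..s}"
proof -
  obtain G where "G \<in> g" "G \<subseteq> B"
    using assms generates unfolding upset_fam_def upset_def by blast
  then show ?thesis using that generator_bounds by blast
qed

lemma mem_shift:
  assumes "A \<in> F" "1 \<le> y" "y < x" "x \<le> n" "x \<in> A" "y \<notin> A"
  shows "(A - {x}) \<union> {y} \<in> F"
proof (rule ccontr)
  assume not_mem: "(A - {x}) \<union> {y} \<notin> F"
  then have "shift_set y x F A = (A - {x}) \<union> {y}" using assms unfolding shift_set_def by auto
  moreover have "shift_fam y x F = F" using compressed assms unfolding left_compressed_def by auto
  ultimately show False using assms(1) not_mem unfolding shift_fam_def by blast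
qed

lemma gstar_iD:
  assumes "E \<in> gstar_i g s m"
  shows "E \<in> g" "s \<in> E" "card E = m" "E \<subseteq> {1..s}" "finite E"
proof -
  show "E \<in> g" "s \<in> E" "card E = m" "E \<subseteq> {1..s}"
    using assms generator_bounds unfolding gstar_i_def by auto
  then show "finite E" by (auto intro: finite_subset)
qed

lemma gstar_i_card_bounds:
  assumes "E \<in> gstar_i g s m"
  shows "1 \<le> m" "m \<le> k" "m \<le> s"
proof -
  note E = gstar_iD[OF assms]
  show "1 \<le> m" using E by (metis One_nat_def Suc_leI card_gt_0_iff empty_iff)
  show "m \<le> k" using E generator_bounds by metis
  show "m \<le> s" using E card_mono[of "{1..s}" E] by simp
qed

lemma finite_gstar_i: "finite (gstar_i g s m)"
proof (rule finite_subset)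
  show "gstar_i g s m \<subseteq> Pow {1..s}" using gstar_iD(4) by blast
qed simp

definition tails :: "nat \<Rightarrow> nat set set" where
  "tails m = {R. R \<subseteq> {s<..n} \<and> card R = m}"

lemma card_tails: "card (tails m) = (n - s) choose m"
  unfolding tails_def using n_subsets[of "{s<..n}" m] by simp

lemma finite_tails: "finite (tails m)"
  unfolding tails_def by simp

lemma tailsD:
  assumes "R \<in> tails m"
  shows "R \<subseteq> {s<..n}" "finite R" "card R = m" "s \<notin> R" "R \<inter> {1..s} = {}" "R \<subseteq> {1..n}"
  using assms unfolding tails_def by (auto intro: finite_subset)

lemma card_trace_Un_tail:
  assumes "X \<subseteq> {1..s}" "finite X" "R \<in> tails m"
  shows "card (X \<union> R) = card X + m"
proof -
  have "X \<inter> R = {}" using assms(1) tailsD(5)[OF assms(3)] by blast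
  then show ?thesis using assms(2) tailsD(2,3)[OF assms(3)] by (simp add: card_Un_disjoint)
qed

definition tail_pairs :: "nat \<Rightarrow> nat set set set" where
  "tail_pairs m = adjacent_pairs (m - 1) (tails m) (tails m)"

lemma card_tail_pairs: "card (tail_pairs (Suc u)) = ((n - s) choose u) * ((n - s - u) choose 2)"
  using card_adjacent_subset_pairs[of "{s<..n}" u] by (simp add: tail_pairs_def tails_def)

lemma tail_pairs_0: "tail_pairs 0 = {}"
  unfolding tail_pairs_def tails_def by (auto elim: adjacent_pairsE)

lemma finite_tail_pairs: "finite (tail_pairs m)"
  unfolding tail_pairs_def by (intro finite_adjacent_pairs finite_tails)

lemma tail_pairsI:
  "R \<in> tails m \<Longrightarrow> R' \<in> tails m \<Longrightarrow> card (R \<inter> R') + 1 = m \<Longrightarrow> {R, R'} \<in> tail_pairs m"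
  unfolding tail_pairs_def by (intro adjacent_pairsI) (auto simp: tails_def)

lemma tail_pairsE:
  assumes "q \<in> tail_pairs m"
  obtains R R' where "q = {R, R'}" "R \<in> tails m" "R' \<in> tails m" "card (R \<inter> R') + 1 = m"
  using assms unfolding tail_pairs_def by (elim adjacent_pairsE) (simp add: tails_def)

definition trace_pairs :: "nat \<Rightarrow> nat set set set" where
  "trace_pairs m = adjacent_pairs_at s (m - 1) (gstar_i g s m) (restrict_fam F s)"

lemma trace_pairsI:
  assumes "A \<in> gstar_i g s m" "B \<in> restrict_fam F s" "card B = m" "card (A \<inter> B) = m - 1" "s \<in> B"
  shows "{A, B} \<in> trace_pairs m"
proof -
  have "card A = m - 1 + 1" "card B = m - 1 + 1"
    using assms gstar_iD(3)[OF assms(1)] gstar_i_card_bounds(1)[OF assms(1)] by simp_all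
  then show ?thesis
    unfolding trace_pairs_def adjacent_pairs_at_def using assms gstar_iD(2)[OF assms(1)] by blast
qed

lemma trace_pairsE:
  assumes "p \<in> trace_pairs m"
  obtains A B where "p = {A, B}" "A \<in> gstar_i g s m" "B \<in> restrict_fam F s" "card A = m"
    "card B = m" "card (A \<inter> B) = m - 1" "s \<in> A" "s \<in> B" "B \<subseteq> {1..s}" "finite B"
proof -
  obtain A B where AB: "p = {A, B}" "A \<in> gstar_i g s m" "B \<in> restrict_fam F s"
    "card A = m - 1 + 1" "card B = m - 1 + 1" "card (A \<inter> B) = m - 1" "s \<in> A" "s \<in> B"
    using assms unfolding trace_pairs_def by (elim adjacent_pairs_atE)
  moreover have "card A = m" using AB(2) gstar_iD by blast
  moreover have "B \<subseteq> {1..s}" "finite B" using AB(3) unfolding restrict_fam_def by auto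
  ultimately show ?thesis using that by simp
qed

lemma finite_trace_pairs: "finite (trace_pairs m)"
proof (rule finite_subset[of _ "Pow (Pow {1..s})"])
  show "trace_pairs m \<subseteq> Pow (Pow {1..s})"
    by (auto elim!: trace_pairsE dest!: gstar_iD(4))
qed simp

lemma splus_gstar_i:
  assumes "E \<in> gstar_i g s m"
  shows "splus E = s"
proof -
  note E = gstar_iD[OF assms]
  then have "Max E = s" by (intro Max_eqI) auto
  then show ?thesis using E(2) unfolding splus_def by auto
qed

lemma splus_le_of_subset: "T \<subseteq> {1..s} \<Longrightarrow> splus T \<le> s"
  using finite_subset[of T "{1..s}"] unfolding splus_def by auto

lemma Int_trace_Un_tail: "X \<subseteq> {1..s} \<Longrightarrow> R \<in> tails m \<Longrightarrow> (X \<union> R) \<inter> {1..s} = X"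
  using tailsD(5)[of R m] by blast

lemma trace_Un_tail_subset: "X \<subseteq> {1..s} \<Longrightarrow> R \<in> tails m \<Longrightarrow> X \<union> R \<subseteq> {1..n}"
  using tailsD(6)[of R m] s_le_n by auto

lemma int_card_tails:
  assumes "m \<le> k"
  shows "int (card (tails (k - m))) = ibinom (int n - int s) (int k - int m)"
proof -
  have "int n - int s = int (n - s)" "int k - int m = int (k - m)" using assms s_le_n by simp_all
  then show ?thesis unfolding card_tails by (simp only: ibinom_of_nat)
qed

lemma int_card_tail_pairs:
  assumes "m \<le> k"
  shows "int (card (tail_pairs (k - m)))
    = ibinom (int n - int s) (int k - int m - 1) * ibinom (int n - int s - int k + int m + 1) 2"
proof (cases "m = k")
  case True
  then show ?thesis by (simp add: tail_pairs_0 ibinom_def)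
next
  case False
  then have "k - m = Suc (k - m - 1)" using assms by simp
  then have "card (tail_pairs (k - m))
      = ((n - s) choose (k - m - 1)) * ((n - s - (k - m - 1)) choose 2)"
    by (metis card_tail_pairs)
  moreover have "int n - int s = int (n - s)" "int k - int m - 1 = int (k - m - 1)"
    "int n - int s - int k + int m + 1 = int (n - s) - int (k - m - 1)"
    using False assms s_le_n by simp_all
  ultimately show ?thesis by (simp only: ibinom_of_nat ibinom_diff_two of_nat_mult)
qed

end

section \<open>The exchanged family\<close>

locale exchange = generated_family +
  fixes i j :: nat
  assumes gstar_i_nonempty: "gstar_i g s i \<noteq> {}"
    and i_ne_j: "i \<noteq> j"
begin

lemma i_bounds: "1 \<le> i" "i \<le> k" "i \<le> s"
  using gstar_i_nonempty gstar_i_card_bounds by blast+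

lemma k_pos: "1 \<le> k"
  using i_bounds by simp

definition removed :: "nat set set" where
  "removed = Dfam n k (gstar_i g s j)"

definition F\<^sub>1 :: "nat set set" where
  "F\<^sub>1 = (F \<union> Dfam n k (gstar_i' g s i)) - removed"

lemma removed_iff: "X \<in> removed \<longleftrightarrow> X \<in> kfam n k \<and> X \<inter> {1..s} \<in> gstar_i g s j"
  unfolding removed_def Dfam_def Dset_def using splus_gstar_i by auto

lemma F1_if_s_notin: "X \<in> F \<Longrightarrow> s \<notin> X \<Longrightarrow> X \<in> F\<^sub>1"
  unfolding F\<^sub>1_def by (auto simp: removed_iff gstar_i_def)

lemma finite_F1: "finite F\<^sub>1"
proof (rule finite_subset[OF _ finite_kfam])
  show "F\<^sub>1 \<subseteq> kfam n k" using family_uniform unfolding F\<^sub>1_def Dfam_def Dset_def by blast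
qed

lemma new_member:
  assumes E: "E \<in> gstar_i g s i" and R: "R \<in> tails (k - i + 1)"
  shows "(E - {s}) \<union> R \<in> F\<^sub>1" "(E - {s}) \<union> R \<notin> F" "card ((E - {s}) \<union> R) = k"
proof -
  note E' = gstar_iD[OF E]
  have trace: "E - {s} \<subseteq> {1..s}" using E' by auto
  show card: "card ((E - {s}) \<union> R) = k"
    using card_trace_Un_tail[OF trace _ R] E' i_bounds by simp
  have kfam: "(E - {s}) \<union> R \<in> kfam n k"
    using card trace_Un_tail_subset[OF trace R] unfolding kfam_def by blast
  have "((E - {s}) \<union> R) \<inter> {1..splus (E - {s})} = E - {s}"
    using E' tailsD(1)[OF R] splus_le_of_subset[OF trace]
    by (intro Int_atLeastAtMost_splus) fastforce+
  then have "(E - {s}) \<union> R \<in> Dfam n k (gstar_i' g s i)"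
    using kfam E unfolding Dfam_def Dset_def gstar_i'_def by blast
  moreover have "s \<notin> (E - {s}) \<union> R" using tailsD(4)[OF R] by blast
  ultimately show "(E - {s}) \<union> R \<in> F\<^sub>1" unfolding F\<^sub>1_def by (auto simp: removed_iff gstar_i_def)
  show "(E - {s}) \<union> R \<notin> F"
  proof
    assume "(E - {s}) \<union> R \<in> F"
    then obtain G where "G \<in> g" "G \<subseteq> E - {s}"
      using Int_trace_Un_tail[OF trace R] by (auto elim: generator_in_trace)
    then show False using generators_antichain[of E G] E' by blast
  qed
qed

text \<open>If the generator below \<open>Y\<close> is a proper subset, drop a point \<open>y\<close> of \<open>Y\<close> outside it and
  shift \<open>s\<close> down to \<open>y\<close>.\<close>
lemma lifted_trace_member:
  assumes Y: "Y \<in> restrict_fam F s" "s \<in> Y" "card Y = i" and R: "R \<in> tails (k - i + 1)"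
  shows "(Y - {s}) \<union> R \<in> F\<^sub>1"
proof -
  obtain A where A: "A \<in> F" "Y = A \<inter> {1..s}" using Y(1) unfolding restrict_fam_def by blast
  then have trace: "Y \<subseteq> {1..s}" "finite Y" by auto
  obtain G where G: "G \<in> g" "G \<subseteq> Y" using generator_in_trace[OF A(1)] A(2) by blast
  show ?thesis
  proof (cases "G = Y")
    case True
    then have "Y \<in> gstar_i g s i" using G Y unfolding gstar_i_def by simp
    then show ?thesis using new_member(1) R by blast
  next
    case False
    then obtain y where y: "y \<in> Y" "y \<notin> G" using G by blast
    define A1 where "A1 = (Y - {y}) \<union> R"
    have "Y - {y} \<subseteq> {1..s}" "finite (Y - {y})" "card (Y - {y}) = i - 1" using trace y Y by auto
    then have "card A1 = k" unfolding A1_def using card_trace_Un_tail[OF _ _ R] i_bounds by simp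
    moreover have "A1 \<subseteq> {1..n}" unfolding A1_def using trace_Un_tail_subset[OF _ R] trace by blast
    ultimately have A1: "A1 \<in> F" using mem_if_generator_subset G y unfolding A1_def by blast
    have "(Y - {s}) \<union> R \<in> F"
    proof (cases "y = s")
      case True
      then show ?thesis using A1 unfolding A1_def by simp
    next
      case False
      then have "y < s" "1 \<le> y" using y trace by fastforce+
      moreover have "s \<in> A1" "y \<notin> A1"
        unfolding A1_def using Y(2) False tailsD(4,5)[OF R] y trace by auto
      ultimately have "(A1 - {s}) \<union> {y} \<in> F" using mem_shift[OF A1] s_le_n by blast
      moreover have "(A1 - {s}) \<union> {y} = (Y - {s}) \<union> R"
        unfolding A1_def using y tailsD(4)[OF R] False by auto
      ultimately show ?thesis by simp
    qed
    then show ?thesis using F1_if_s_notin tailsD(4)[OF R] by blast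
  qed
qed

text \<open>The partner comes from \<open>E \<union> (R - {r}) \<in> F\<close>: for \<open>y = s\<close> it is this set itself, which
  survives the removal since its trace has size \<open>i \<noteq> j\<close>; otherwise shift \<open>s\<close> down to \<open>y\<close>.\<close>
lemma exchanged_member:
  assumes E: "E \<in> gstar_i g s i" and R: "R \<in> tails (k - i + 1)" and r: "r \<in> R"
    and y: "y \<in> {1..s}" "y \<notin> E - {s}"
  shows "((E - {s}) \<union> R - {r}) \<union> {y} \<in> F\<^sub>1"
proof -
  note E' = gstar_iD[OF E]
  have r': "r \<notin> E" "r \<noteq> s" using r tailsD(4,5)[OF R] E' by auto
  have R': "R - {r} \<in> tails (k - i)" using R r unfolding tails_def by auto
  define A1 where "A1 = E \<union> (R - {r})"
  have "card A1 = k" unfolding A1_def using card_trace_Un_tail[OF E'(4,5) R'] E' i_bounds by simp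
  moreover have "A1 \<subseteq> {1..n}" unfolding A1_def using trace_Un_tail_subset[OF E'(4) R'] .
  ultimately have A1: "A1 \<in> F" using mem_if_generator_subset[OF _ _ E'(1)] unfolding A1_def by blast
  show ?thesis
  proof (cases "y = s")
    case True
    have "A1 \<inter> {1..s} = E" unfolding A1_def using Int_trace_Un_tail[OF E'(4) R'] .
    then have "A1 \<notin> removed" using E' i_ne_j by (auto simp: removed_iff gstar_i_def)
    moreover have "((E - {s}) \<union> R - {r}) \<union> {y} = A1" unfolding A1_def using True E' r' by auto
    ultimately show ?thesis using A1 unfolding F\<^sub>1_def by simp
  next
    case False
    then have "1 \<le> y" "y < s" using y by auto
    moreover have "s \<in> A1" "y \<notin> A1" unfolding A1_def using E' y False tailsD(4,5)[OF R] by auto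
    ultimately have "(A1 - {s}) \<union> {y} \<in> F" using mem_shift[OF A1] s_le_n by blast
    moreover have "(A1 - {s}) \<union> {y} = ((E - {s}) \<union> R - {r}) \<union> {y}"
      unfolding A1_def using r' tailsD(4)[OF R] by auto
    ultimately show ?thesis using F1_if_s_notin False tailsD(4)[OF R] by simp
  qed
qed

abbreviation adj_pairs :: "nat set set \<Rightarrow> nat set set set" where
  "adj_pairs X \<equiv> adjacent_pairs (k - 1) X X"

lemma adj_pairsI:
  "A \<in> X \<Longrightarrow> B \<in> X \<Longrightarrow> card A = k \<Longrightarrow> card B = k \<Longrightarrow> card (A \<inter> B) = k - 1 \<Longrightarrow> {A, B} \<in> adj_pairs X"
  using k_pos by (intro adjacent_pairsI) auto

lemma adj_pairsE:
  assumes "Q \<in> adj_pairs X"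
  obtains A B where "Q = {A, B}" "A \<in> X" "B \<in> X" "card A = k" "card B = k" "card (A \<inter> B) = k - 1"
  using assms k_pos by (elim adjacent_pairsE) simp

section \<open>Adjacent pairs gained\<close>

definition gained_tail_pairs :: "nat set set set" where
  "gained_tail_pairs =
     (\<lambda>(E, q). (\<lambda>R. (E - {s}) \<union> R) ` q) ` (gstar_i g s i \<times> tail_pairs (k - i + 1))"

definition gained_trace_pairs :: "nat set set set" where
  "gained_trace_pairs = (\<lambda>(p, R). (\<lambda>Y. (Y - {s}) \<union> R) ` p) ` (trace_pairs i \<times> tails (k - i + 1))"

definition gained_crossing_moves :: "(nat set \<times> nat set \<times> nat \<times> nat) set" where
  "gained_crossing_moves =
     (SIGMA E:gstar_i g s i. SIGMA R:tails (k - i + 1). R \<times> ({1..s} - (E - {s})))"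

definition gained_crossing_pairs :: "nat set set set" where
  "gained_crossing_pairs =
     (\<lambda>(E, R, r, y). {(E - {s}) \<union> R, ((E - {s}) \<union> R - {r}) \<union> {y}}) ` gained_crossing_moves"

lemma gained_tail_pairsE:
  assumes "Q \<in> gained_tail_pairs"
  obtains E R R' where "E \<in> gstar_i g s i" "R \<in> tails (k - i + 1)" "R' \<in> tails (k - i + 1)"
    "card (R \<inter> R') = k - i" "Q = {(E - {s}) \<union> R, (E - {s}) \<union> R'}"
  using assms unfolding gained_tail_pairs_def by (auto elim!: tail_pairsE)

lemma gained_trace_pairsE:
  assumes "Q \<in> gained_trace_pairs"
  obtains A B R where "A \<in> gstar_i g s i" "B \<in> restrict_fam F s" "card B = i"
    "card (A \<inter> B) = i - 1" "s \<in> B" "B \<subseteq> {1..s}" "finite B" "R \<in> tails (k - i + 1)"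
    "Q = {(A - {s}) \<union> R, (B - {s}) \<union> R}"
  using assms unfolding gained_trace_pairs_def by (auto elim!: trace_pairsE)

lemma gained_crossing_pairsE:
  assumes "Q \<in> gained_crossing_pairs"
  obtains E R r y where "E \<in> gstar_i g s i" "R \<in> tails (k - i + 1)" "r \<in> R" "y \<in> {1..s}"
    "y \<notin> E - {s}" "Q = {(E - {s}) \<union> R, ((E - {s}) \<union> R - {r}) \<union> {y}}"
proof -
  obtain E R r y where "(E, R, r, y) \<in> gained_crossing_moves"
    "Q = {(E - {s}) \<union> R, ((E - {s}) \<union> R - {r}) \<union> {y}}"
    using assms unfolding gained_crossing_pairs_def by auto
  then show ?thesis using that unfolding gained_crossing_moves_def by blast
qed

lemma gained_tail_pairs_subset: "gained_tail_pairs \<subseteq> adj_pairs F\<^sub>1"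
proof
  fix Q assume "Q \<in> gained_tail_pairs"
  then obtain E R R' where E: "E \<in> gstar_i g s i"
    and R: "R \<in> tails (k - i + 1)" "R' \<in> tails (k - i + 1)" and RR': "card (R \<inter> R') = k - i"
    and Q: "Q = {(E - {s}) \<union> R, (E - {s}) \<union> R'}"
    by (rule gained_tail_pairsE)
  note E' = gstar_iD[OF E]
  have "R \<inter> R' \<in> tails (k - i)" using R RR' unfolding tails_def by auto
  then have "card ((E - {s}) \<union> (R \<inter> R')) = card (E - {s}) + (k - i)"
    using E' by (intro card_trace_Un_tail) auto
  then have "card ((E - {s}) \<union> (R \<inter> R')) = k - 1" using E' i_bounds by simp
  moreover have "((E - {s}) \<union> R) \<inter> ((E - {s}) \<union> R') = (E - {s}) \<union> (R \<inter> R')" by blast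
  ultimately show "Q \<in> adj_pairs F\<^sub>1" unfolding Q using new_member[OF E] R by (intro adj_pairsI) auto
qed

lemma card_gained_tail_pairs:
  "card gained_tail_pairs = card (gstar_i g s i) * card (tail_pairs (k - i + 1))"
proof -
  have "inj_on (\<lambda>(E, q). (\<lambda>R. (E - {s}) \<union> R) ` q) (gstar_i g s i \<times> tail_pairs (k - i + 1))"
  proof (rule inj_on_inverseI[where g = "\<lambda>Q. (insert s (\<Union>Q \<inter> {1..s}), (\<lambda>X. X - {1..s}) ` Q)"],
      goal_cases)
    case (1 x)
    then obtain E q R R' where x: "x = (E, q)" "E \<in> gstar_i g s i"
      and q: "q = {R, R'}" "R \<in> tails (k - i + 1)" "R' \<in> tails (k - i + 1)"
      by (auto elim: tail_pairsE)
    note E' = gstar_iD[OF x(2)]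
    show ?case unfolding x q using E' tailsD(1)[OF q(2)] tailsD(1)[OF q(3)] by auto
  qed
  then show ?thesis unfolding gained_tail_pairs_def by (simp add: card_image card_cartesian_product)
qed

lemma gained_trace_pairs_subset: "gained_trace_pairs \<subseteq> adj_pairs F\<^sub>1"
proof
  fix Q assume "Q \<in> gained_trace_pairs"
  then obtain A B R where A: "A \<in> gstar_i g s i" and B: "B \<in> restrict_fam F s" "card B = i"
    "card (A \<inter> B) = i - 1" "s \<in> B" "B \<subseteq> {1..s}" "finite B" and R: "R \<in> tails (k - i + 1)"
    and Q: "Q = {(A - {s}) \<union> R, (B - {s}) \<union> R}"
    by (rule gained_trace_pairsE)
  note A' = gstar_iD[OF A]
  have "card ((B - {s}) \<union> R) = card (B - {s}) + (k - i + 1)"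
    using B by (intro card_trace_Un_tail[OF _ _ R]) auto
  then have card_B: "card ((B - {s}) \<union> R) = k" using B i_bounds by simp
  have "0 < card (A \<inter> B)" using A'(2,5) B(4) card_gt_0_iff[of "A \<inter> B"] by blast
  moreover have "card (((A \<inter> B) - {s}) \<union> R) = card ((A \<inter> B) - {s}) + (k - i + 1)"
    using A' by (intro card_trace_Un_tail[OF _ _ R]) auto
  ultimately have "card (((A \<inter> B) - {s}) \<union> R) = k - 1" using A' B i_bounds by simp
  moreover have "((A - {s}) \<union> R) \<inter> ((B - {s}) \<union> R) = ((A \<inter> B) - {s}) \<union> R" by blast
  ultimately show "Q \<in> adj_pairs F\<^sub>1"
    unfolding Q using new_member(1,3)[OF A R] lifted_trace_member[OF B(1,4,2) R] card_B
    by (intro adj_pairsI) simp_all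
qed

lemma card_gained_trace_pairs:
  "card gained_trace_pairs = card (trace_pairs i) * card (tails (k - i + 1))"
proof -
  have "inj_on (\<lambda>(p, R). (\<lambda>Y. (Y - {s}) \<union> R) ` p) (trace_pairs i \<times> tails (k - i + 1))"
  proof (rule inj_on_inverseI[where g = "\<lambda>Q. ((\<lambda>X. insert s (X \<inter> {1..s})) ` Q, \<Union>Q - {1..s})"],
      goal_cases)
    case (1 x)
    then obtain A B R where x: "x = ({A, B}, R)" "A \<in> gstar_i g s i" "s \<in> B" "B \<subseteq> {1..s}"
      and R: "R \<in> tails (k - i + 1)"
      by (auto elim: trace_pairsE)
    note A' = gstar_iD[OF x(2)]
    show ?case unfolding x(1) using A' x(3,4) tailsD(1)[OF R] by auto
  qed
  then show ?thesis
    unfolding gained_trace_pairs_def by (simp add: card_image card_cartesian_product)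
qed

lemma gained_crossing_pairs_subset: "gained_crossing_pairs \<subseteq> adj_pairs F\<^sub>1"
proof
  fix Q assume "Q \<in> gained_crossing_pairs"
  then obtain E R r y where E: "E \<in> gstar_i g s i" and R: "R \<in> tails (k - i + 1)" and r: "r \<in> R"
    and y: "y \<in> {1..s}" "y \<notin> E - {s}" and Q: "Q = {(E - {s}) \<union> R, ((E - {s}) \<union> R - {r}) \<union> {y}}"
    by (rule gained_crossing_pairsE)
  define B where "B = (E - {s}) \<union> R"
  have B: "card B = k" "r \<in> B" "y \<notin> B" "finite B"
    unfolding B_def using new_member(3)[OF E R] r y tailsD(2,5)[OF R] gstar_iD(5)[OF E] by auto
  then have "card (B - {r}) = k - 1" by simp
  moreover have "card ((B - {r}) \<union> {y}) = k" using B k_pos by simp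
  moreover have "B \<inter> ((B - {r}) \<union> {y}) = B - {r}" using B by auto
  ultimately show "Q \<in> adj_pairs F\<^sub>1"
    unfolding Q B_def[symmetric]
    using new_member(1)[OF E R, folded B_def] exchanged_member[OF E R r y, folded B_def] B
    by (intro adj_pairsI) simp_all
qed

lemma card_gained_crossing_moves:
  "card gained_crossing_moves
    = card (gstar_i g s i) * (card (tails (k - i + 1)) * ((k - i + 1) * (s - i + 1)))"
proof -
  have "card ({1..s} - (E - {s})) = s - i + 1" if "E \<in> gstar_i g s i" for E
    using gstar_iD[OF that] i_bounds by (subst card_Diff_subset) auto
  then show ?thesis
    unfolding gained_crossing_moves_def
    using finite_gstar_i finite_tails tailsD(2,3) by (simp add: card_cartesian_product)
qed

lemma gained_crossing_movesD:
  assumes "(E, R, r, y) \<in> gained_crossing_moves"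
  defines "B \<equiv> (E - {s}) \<union> R"
  shows "E \<in> gstar_i g s i" "R \<in> tails (k - i + 1)" "r \<in> R" "y \<in> {1..s}" "y \<notin> E - {s}"
    "B \<inter> {1..s} = E - {s}" "B - {1..s} = R"
    "B - insert y (B - {r}) = {r}" "insert y (B - {r}) - B = {y}"
    "card (B \<inter> {1..s}) = i - 1" "card (insert y (B - {r}) \<inter> {1..s}) = i"
proof -
  show E: "E \<in> gstar_i g s i" and R: "R \<in> tails (k - i + 1)" and r: "r \<in> R"
    and y: "y \<in> {1..s}" "y \<notin> E - {s}"
    using assms unfolding gained_crossing_moves_def by auto
  have "r \<notin> {1..s}" using r tailsD(5)[OF R] by blast
  then have traces: "B \<inter> {1..s} = E - {s}" "insert y (B - {r}) \<inter> {1..s} = insert y (E - {s})"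
    and "B - {1..s} = R" "r \<in> B" "y \<notin> B"
    unfolding B_def using gstar_iD(4)[OF E] r y tailsD(5)[OF R] by auto
  then show "B \<inter> {1..s} = E - {s}" "B - {1..s} = R"
    "B - insert y (B - {r}) = {r}" "insert y (B - {r}) - B = {y}"
    by auto
  show "card (B \<inter> {1..s}) = i - 1" "card (insert y (B - {r}) \<inter> {1..s}) = i"
    unfolding traces using gstar_iD[OF E] y i_bounds by simp_all
qed

text \<open>The first set of a gained crossing pair has a trace of size \<open>i - 1\<close>, the second one of
  size \<open>i\<close>; this recovers the ordered pair and hence the move.\<close>
lemma card_gained_crossing_pairs: "card gained_crossing_pairs = card gained_crossing_moves"
proof -
  have "inj_on (\<lambda>(E, R, r, y). {(E - {s}) \<union> R, ((E - {s}) \<union> R - {r}) \<union> {y}}) gained_crossing_moves"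
  proof (rule inj_onI)
    fix z z' assume "z \<in> gained_crossing_moves" "z' \<in> gained_crossing_moves"
      and "(\<lambda>(E, R, r, y). {(E - {s}) \<union> R, ((E - {s}) \<union> R - {r}) \<union> {y}}) z
         = (\<lambda>(E, R, r, y). {(E - {s}) \<union> R, ((E - {s}) \<union> R - {r}) \<union> {y}}) z'"
    moreover obtain E R r y E' R' r' y' where z: "z = (E, R, r, y)" "z' = (E', R', r', y')"
      using prod_cases4 by metis
    moreover define B B' where "B = (E - {s}) \<union> R" and "B' = (E' - {s}) \<union> R'"
    ultimately have x: "(E, R, r, y) \<in> gained_crossing_moves"
      and x': "(E', R', r', y') \<in> gained_crossing_moves"
      and eq: "{B, insert y (B - {r})} = {B', insert y' (B' - {r'})}"
      by simp_all
    note m = gained_crossing_movesD[OF x, folded B_def]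
      and m' = gained_crossing_movesD[OF x', folded B'_def]
    have "B \<noteq> insert y' (B' - {r'})"
    proof
      assume "B = insert y' (B' - {r'})"
      then have "i - 1 = i" using m(10) m'(11) by simp
      then show False using i_bounds by simp
    qed
    then have B: "B = B'" and D: "insert y (B - {r}) = insert y' (B' - {r'})"
      using eq unfolding doubleton_eq_iff by blast+
    have "E - {s} = E' - {s}" using m(6) m'(6) B by simp
    then have "E = E'"
      using insert_Diff[OF gstar_iD(2)[OF m(1)]] insert_Diff[OF gstar_iD(2)[OF m'(1)]] by metis
    moreover have "R = R'" using m(7) m'(7) B by simp
    moreover have "r = r'" using m(8) m'(8) B D by simp
    moreover have "y = y'" using m(9) m'(9) B D by simp
    ultimately show "z = z'" using z by simp
  qed
  then show ?thesis unfolding gained_crossing_pairs_def by (rule card_image)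
qed

lemma gained_tail_pairsD:
  assumes "Q \<in> gained_tail_pairs"
  shows "\<not> Q \<subseteq> F" "X \<in> Q \<Longrightarrow> card (X \<inter> {1..s}) = i - 1"
    "X \<in> Q \<Longrightarrow> Y \<in> Q \<Longrightarrow> X \<inter> {1..s} = Y \<inter> {1..s}"
proof -
  obtain E R R' where E: "E \<in> gstar_i g s i" and R: "R \<in> tails (k - i + 1)" "R' \<in> tails (k - i + 1)"
    and Q: "Q = {(E - {s}) \<union> R, (E - {s}) \<union> R'}"
    using assms by (rule gained_tail_pairsE)
  show "\<not> Q \<subseteq> F" using new_member(2)[OF E R(1)] Q by blast
  have "E - {s} \<subseteq> {1..s}" using gstar_iD(4)[OF E] by blast
  then have "((E - {s}) \<union> R) \<inter> {1..s} = E - {s}" "((E - {s}) \<union> R') \<inter> {1..s} = E - {s}"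
    using Int_trace_Un_tail R by blast+
  then have traces: "X \<inter> {1..s} = E - {s}" if "X \<in> Q" for X using that Q by blast
  then show "X \<in> Q \<Longrightarrow> Y \<in> Q \<Longrightarrow> X \<inter> {1..s} = Y \<inter> {1..s}" by simp
  show "X \<in> Q \<Longrightarrow> card (X \<inter> {1..s}) = i - 1" using traces gstar_iD[OF E] by simp
qed

lemma gained_trace_pairsD:
  assumes "Q \<in> gained_trace_pairs"
  shows "\<not> Q \<subseteq> F" "X \<in> Q \<Longrightarrow> card (X \<inter> {1..s}) = i - 1"
    "\<exists>X\<in>Q. \<exists>Y\<in>Q. X \<inter> {1..s} \<noteq> Y \<inter> {1..s}"
proof -
  obtain A B R where A: "A \<in> gstar_i g s i" and B: "card B = i" "card (A \<inter> B) = i - 1" "s \<in> B"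
    "B \<subseteq> {1..s}" "finite B" and R: "R \<in> tails (k - i + 1)"
    and Q: "Q = {(A - {s}) \<union> R, (B - {s}) \<union> R}"
    using assms by (rule gained_trace_pairsE)
  note A' = gstar_iD[OF A]
  show "\<not> Q \<subseteq> F" using new_member(2)[OF A R] Q by blast
  have traceA: "((A - {s}) \<union> R) \<inter> {1..s} = A - {s}"
    by (rule Int_trace_Un_tail[OF _ R]) (use A'(4) in blast)
  have traceB: "((B - {s}) \<union> R) \<inter> {1..s} = B - {s}"
    by (rule Int_trace_Un_tail[OF _ R]) (use B(4) in blast)
  have "card (A - {s}) = i - 1" "card (B - {s}) = i - 1" using A'(2,3,5) B(1,3,5) by simp_all
  moreover have members: "(A - {s}) \<union> R \<in> Q" "(B - {s}) \<union> R \<in> Q"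
    "X \<in> Q \<Longrightarrow> X = (A - {s}) \<union> R \<or> X = (B - {s}) \<union> R"
    using Q by simp_all
  ultimately show "X \<in> Q \<Longrightarrow> card (X \<inter> {1..s}) = i - 1" using traceA traceB by metis
  have "A \<noteq> B"
  proof
    assume "A = B"
    then have "card (A \<inter> B) = i" using B(1) by simp
    then show False using B(2) i_bounds by simp
  qed
  have "A - {s} \<noteq> B - {s}"
  proof
    assume "A - {s} = B - {s}"
    then have "insert s (A - {s}) = insert s (B - {s})" by simp
    then show False using \<open>A \<noteq> B\<close> A'(2) B(3) by (simp add: insert_absorb)
  qed
  then show "\<exists>X\<in>Q. \<exists>Y\<in>Q. X \<inter> {1..s} \<noteq> Y \<inter> {1..s}" using traceA traceB members(1,2) by metis
qed

lemma gained_crossing_pairsD: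
  assumes "Q \<in> gained_crossing_pairs"
  shows "\<not> Q \<subseteq> F" "\<exists>X\<in>Q. card (X \<inter> {1..s}) = i"
proof -
  obtain z where z: "z \<in> gained_crossing_moves"
    and Q: "Q = (\<lambda>(E, R, r, y). {(E - {s}) \<union> R, ((E - {s}) \<union> R - {r}) \<union> {y}}) z"
    using assms unfolding gained_crossing_pairs_def by blast
  obtain E R r y where "z = (E, R, r, y)" using prod_cases4 by metis
  then have m: "(E, R, r, y) \<in> gained_crossing_moves"
    and Q: "Q = {(E - {s}) \<union> R, insert y ((E - {s}) \<union> R - {r})}"
    using z Q by simp_all
  show "\<not> Q \<subseteq> F" using new_member(2) gained_crossing_movesD(1,2)[OF m] Q by blast
  show "\<exists>X\<in>Q. card (X \<inter> {1..s}) = i" using gained_crossing_movesD(11)[OF m] Q by blast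
qed

lemma gained_pairs_disjoint:
  "adj_pairs (F - removed) \<inter> gained_tail_pairs = {}"
  "(adj_pairs (F - removed) \<union> gained_tail_pairs) \<inter> gained_trace_pairs = {}"
  "(adj_pairs (F - removed) \<union> gained_tail_pairs \<union> gained_trace_pairs)
    \<inter> gained_crossing_pairs = {}"
proof -
  have "Q \<subseteq> F" if "Q \<in> adj_pairs (F - removed)" for Q
    using that by (elim adj_pairsE) blast
  moreover have "\<not> Q \<subseteq> F"
    if "Q \<in> gained_tail_pairs \<union> gained_trace_pairs \<union> gained_crossing_pairs" for Q
    using that gained_tail_pairsD(1) gained_trace_pairsD(1) gained_crossing_pairsD(1) by blast
  moreover have "Q \<notin> gained_tail_pairs" if trace: "Q \<in> gained_trace_pairs" for Q
  proof
    obtain X Y where "X \<in> Q" "Y \<in> Q" "X \<inter> {1..s} \<noteq> Y \<inter> {1..s}"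
      using gained_trace_pairsD(3)[OF trace] by blast
    moreover assume "Q \<in> gained_tail_pairs"
    ultimately show False using gained_tail_pairsD(3) by blast
  qed
  moreover have "Q \<notin> gained_tail_pairs \<union> gained_trace_pairs"
    if crossing: "Q \<in> gained_crossing_pairs" for Q
  proof
    obtain X where "X \<in> Q" "card (X \<inter> {1..s}) = i"
      using gained_crossing_pairsD(2)[OF crossing] by blast
    moreover assume "Q \<in> gained_tail_pairs \<union> gained_trace_pairs"
    ultimately have "i = i - 1"
      using gained_tail_pairsD(2)[OF _ \<open>X \<in> Q\<close>] gained_trace_pairsD(2)[OF _ \<open>X \<in> Q\<close>] by auto
    then show False using i_bounds by simp
  qed
  ultimately show
    "adj_pairs (F - removed) \<inter> gained_tail_pairs = {}"
    "(adj_pairs (F - removed) \<union> gained_tail_pairs) \<inter> gained_trace_pairs = {}"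
    "(adj_pairs (F - removed) \<union> gained_tail_pairs \<union> gained_trace_pairs)
      \<inter> gained_crossing_pairs = {}"
    by blast+
qed

lemma card_adj_pairs_F1_ge:
  "card (adj_pairs (F - removed)) + card gained_tail_pairs + card gained_trace_pairs
     + card gained_crossing_pairs \<le> card (adj_pairs F\<^sub>1)"
proof -
  have "F - removed \<subseteq> F\<^sub>1" unfolding F\<^sub>1_def by blast
  then have "adj_pairs (F - removed) \<union> gained_tail_pairs \<union> gained_trace_pairs
      \<union> gained_crossing_pairs \<subseteq> adj_pairs F\<^sub>1" (is "?U \<subseteq> _")
    using adjacent_pairs_mono gained_tail_pairs_subset gained_trace_pairs_subset
      gained_crossing_pairs_subset by blast
  moreover have finite: "finite (adj_pairs F\<^sub>1)" using finite_F1 by (rule finite_adjacent_pairs)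
  ultimately have "card ?U \<le> card (adj_pairs F\<^sub>1)" by (rule card_mono[rotated])
  moreover have fin: "finite (adj_pairs (F - removed))" "finite gained_tail_pairs"
    "finite gained_trace_pairs" "finite gained_crossing_pairs"
    using finite_subset[OF \<open>?U \<subseteq> _\<close> finite] by (meson finite_Un)+
  have "card ?U = card (adj_pairs (F - removed)) + card gained_tail_pairs + card gained_trace_pairs
      + card gained_crossing_pairs"
    using card_Un_disjoint[OF _ fin(2) gained_pairs_disjoint(1)]
      card_Un_disjoint[OF _ fin(3) gained_pairs_disjoint(2)]
      card_Un_disjoint[OF _ fin(4) gained_pairs_disjoint(3)] fin(1-3) by simp
  ultimately show ?thesis by simp
qed

section \<open>Adjacent pairs lost\<close>

definition lost_tail_pairs :: "nat set set set" where
  "lost_tail_pairs = (\<lambda>(E, q). (\<lambda>R. E \<union> R) ` q) ` (gstar_i g s j \<times> tail_pairs (k - j))"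

definition lost_trace_pairs :: "nat set set set" where
  "lost_trace_pairs = (\<lambda>(p, R). (\<lambda>Y. Y \<union> R) ` p) ` (trace_pairs j \<times> tails (k - j))"

definition lost_crossing_moves :: "(nat set \<times> nat set \<times> nat \<times> nat) set" where
  "lost_crossing_moves = (SIGMA E:gstar_i g s j. SIGMA R:tails (k - j). insert s R \<times> ({1..s} - E))"

definition lost_crossing_pairs :: "nat set set set" where
  "lost_crossing_pairs = (\<lambda>(E, R, c, y). {E \<union> R, (E \<union> R - {c}) \<union> {y}}) ` lost_crossing_moves"

lemma removedD:
  assumes "C \<in> removed"
  shows "C \<inter> {1..s} \<in> gstar_i g s j" "C - {1..s} \<in> tails (k - j)" "card C = k" "C \<subseteq> {1..n}"
proof -
  show E: "C \<inter> {1..s} \<in> gstar_i g s j" and C: "card C = k" "C \<subseteq> {1..n}"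
    using assms unfolding removed_iff kfam_def by auto
  have "finite C" using C(2) by (rule finite_subset) simp
  then have "card C = card (C \<inter> {1..s}) + card (C - {1..s})"
    by (metis Int_Diff_Un Int_Diff_disjoint card_Un_disjoint finite_Diff finite_Int)
  then show "C - {1..s} \<in> tails (k - j)" using C gstar_iD(3)[OF E] unfolding tails_def by auto
qed

lemma lost_trace_pairsI:
  assumes E: "E \<in> gstar_i g s j" and R: "R \<in> tails (k - j)" and c: "c \<in> E" "c \<noteq> s"
    and y: "y \<in> {1..s}" "y \<notin> E" and D: "insert y (E \<union> R - {c}) \<in> F"
  shows "{E \<union> R, insert y (E \<union> R - {c})} \<in> lost_trace_pairs"
proof -
  note E' = gstar_iD[OF E]
  define Y where "Y = insert y (E - {c})"
  have "Y = insert y (E \<union> R - {c}) \<inter> {1..s}"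
    unfolding Y_def using E'(4) y tailsD(5)[OF R] by auto
  then have "Y \<in> restrict_fam F s" using D unfolding restrict_fam_def by blast
  moreover have "E \<inter> Y = E - {c}" unfolding Y_def using y by auto
  then have "card Y = j" "card (E \<inter> Y) = j - 1" "s \<in> Y"
    unfolding Y_def using E' c y gstar_i_card_bounds[OF E] by auto
  ultimately have "{E, Y} \<in> trace_pairs j" using E by (intro trace_pairsI)
  moreover have "c \<notin> R" using c(1) E'(4) tailsD(5)[OF R] by blast
  then have "{E \<union> R, insert y (E \<union> R - {c})} = (\<lambda>Y. Y \<union> R) ` {E, Y}" unfolding Y_def by auto
  ultimately show ?thesis
    unfolding lost_trace_pairs_def using R by (intro image_eqI[where x = "({E, Y}, R)"]) simp_all
qed

lemma lost_tail_pairsI: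
  assumes E: "E \<in> gstar_i g s j" and R: "R \<in> tails (k - j)" and c: "c \<in> R"
    and y: "s < y" "y \<le> n" "y \<notin> R"
  shows "{E \<union> R, insert y (E \<union> R - {c})} \<in> lost_tail_pairs"
proof -
  note R' = tailsD[OF R]
  define R2 where "R2 = insert y (R - {c})"
  have "R \<inter> R2 = R - {c}" unfolding R2_def using y by auto
  moreover have "0 < card R" using R'(2) c card_gt_0_iff by blast
  ultimately have "card (R \<inter> R2) + 1 = k - j" using R' c by simp
  moreover have "R2 \<in> tails (k - j)" unfolding R2_def tails_def using R' c y by auto
  ultimately have "{R, R2} \<in> tail_pairs (k - j)" using R by (intro tail_pairsI)
  moreover have "y \<notin> E" "c \<notin> E" using gstar_iD(4)[OF E] y R'(5) c by auto
  then have "{E \<union> R, insert y (E \<union> R - {c})} = (\<lambda>R. E \<union> R) ` {R, R2}" unfolding R2_def by auto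
  ultimately show ?thesis
    unfolding lost_tail_pairs_def using E by (intro image_eqI[where x = "(E, {R, R2})"]) simp_all
qed

lemma lost_crossing_pairsI:
  assumes "E \<in> gstar_i g s j" "R \<in> tails (k - j)" "c \<in> insert s R" "y \<in> {1..s}" "y \<notin> E"
  shows "{E \<union> R, insert y (E \<union> R - {c})} \<in> lost_crossing_pairs"
  unfolding lost_crossing_pairs_def lost_crossing_moves_def using assms
  by (intro image_eqI[where x = "(E, R, c, y)"]) simp_all

text \<open>In the last case a trace point \<open>c\<close> cannot be the one exchanged: the generator below
  \<open>D\<close> would then lie in \<open>E - {c}\<close>, contradicting minimality of \<open>E\<close>.\<close>
lemma removed_adjacent_pair_lost:
  assumes C: "C \<in> removed" and D: "D \<in> F" and CD: "card (C \<inter> D) = k - 1"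
  shows "{C, D} \<in> lost_tail_pairs \<union> lost_trace_pairs \<union> lost_crossing_pairs"
proof -
  define E R where "E = C \<inter> {1..s}" and "R = C - {1..s}"
  note C' = removedD[OF C, folded E_def R_def]
  have C_eq: "C = E \<union> R" unfolding E_def R_def by blast
  have "finite C" "finite D" using C'(4) memberD[OF D] by (auto intro: finite_subset)
  then obtain c y where cy: "c \<in> C" "c \<notin> D" "y \<in> D" "y \<notin> C" and D_eq: "D = insert y (C - {c})"
    by (rule adjacent_sets_exchange) (use C' memberD[OF D] CD k_pos in simp_all)
  have y: "1 \<le> y" "y \<le> n" "y \<notin> E" "y \<notin> R" using memberD[OF D] cy C_eq by auto
  have pair: "{C, D} = {E \<union> R, insert y (E \<union> R - {c})}" using C_eq D_eq by simp
  consider (crossing) "y \<le> s" "c \<in> insert s R" | (trace) "y \<le> s" "c \<in> E" "c \<noteq> s" | (tail) "s < y"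
    using cy(1) C_eq by force
  then show ?thesis
  proof cases
    case crossing
    then show ?thesis using lost_crossing_pairsI[OF C'(1,2) crossing(2)] y unfolding pair by simp
  next
    case trace
    moreover have "insert y (E \<union> R - {c}) \<in> F" using D C_eq D_eq by simp
    ultimately show ?thesis using lost_trace_pairsI[OF C'(1,2)] y unfolding pair by simp
  next
    case tail
    have "c \<notin> E"
    proof
      assume "c \<in> E"
      obtain G where "G \<in> g" "G \<subseteq> D \<inter> {1..s}" using D by (rule generator_in_trace)
      moreover have "y \<notin> {1..s}" using tail by simp
      then have "D \<inter> {1..s} \<subseteq> E - {c}" unfolding D_eq E_def by blast
      ultimately show False using generators_antichain[OF gstar_iD(1)[OF C'(1)]] \<open>c \<in> E\<close> by blast
    qed
    then have "c \<in> R" using cy(1) C_eq by blast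
    then show ?thesis using lost_tail_pairsI[OF C'(1,2)] tail y unfolding pair by simp
  qed
qed

lemma card_lost_tail_pairs_le:
  "card lost_tail_pairs \<le> card (gstar_i g s j) * card (tail_pairs (k - j))"
  unfolding lost_tail_pairs_def
  using card_image_le[of "gstar_i g s j \<times> tail_pairs (k - j)"] finite_gstar_i finite_tail_pairs
  by (simp add: card_cartesian_product)

lemma card_lost_trace_pairs_le:
  "card lost_trace_pairs \<le> card (trace_pairs j) * card (tails (k - j))"
  unfolding lost_trace_pairs_def
  using card_image_le[of "trace_pairs j \<times> tails (k - j)"] finite_trace_pairs finite_tails
  by (simp add: card_cartesian_product)

lemma card_lost_crossing_pairs_le:
  "card lost_crossing_pairs
    \<le> card (gstar_i g s j) * (card (tails (k - j)) * ((k - j + 1) * (s - j)))"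
proof -
  have "card (insert s R \<times> ({1..s} - E)) = (k - j + 1) * (s - j)"
    if "E \<in> gstar_i g s j" "R \<in> tails (k - j)" for E R
    using tailsD[OF that(2)] gstar_iD[OF that(1)]
    by (simp add: card_cartesian_product card_Diff_subset)
  then have moves: "card lost_crossing_moves
      = card (gstar_i g s j) * (card (tails (k - j)) * ((k - j + 1) * (s - j)))"
    unfolding lost_crossing_moves_def using finite_gstar_i finite_tails tailsD(2) by simp
  have "finite lost_crossing_moves"
    unfolding lost_crossing_moves_def using finite_gstar_i finite_tails tailsD(2)
    by (intro finite_SigmaI) auto
  then have "card lost_crossing_pairs \<le> card lost_crossing_moves"
    unfolding lost_crossing_pairs_def by (rule card_image_le)
  then show ?thesis unfolding moves .
qed

lemma adj_pairs_subset_lost: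
  "adj_pairs F \<subseteq> adj_pairs (F - removed) \<union> lost_tail_pairs \<union> lost_trace_pairs \<union> lost_crossing_pairs"
proof
  fix Q assume "Q \<in> adj_pairs F"
  then obtain A B where Q: "Q = {A, B}" and AB: "A \<in> F" "B \<in> F" "card A = k" "card B = k"
    "card (A \<inter> B) = k - 1"
    by (rule adj_pairsE)
  consider "A \<in> removed" | "B \<in> removed" | "A \<notin> removed" "B \<notin> removed" by blast
  then show "Q \<in> adj_pairs (F - removed) \<union> lost_tail_pairs \<union> lost_trace_pairs \<union> lost_crossing_pairs"
  proof cases
    case 1
    then show ?thesis using removed_adjacent_pair_lost AB unfolding Q by blast
  next
    case 2
    then have "{B, A} \<in> lost_tail_pairs \<union> lost_trace_pairs \<union> lost_crossing_pairs"
      using removed_adjacent_pair_lost AB by (simp add: Int_commute)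
    then show ?thesis unfolding Q by (simp add: insert_commute)
  next
    case 3
    then show ?thesis using adj_pairsI[of A "F - removed" B] AB unfolding Q by blast
  qed
qed

lemma card_adj_pairs_F_le:
  "card (adj_pairs F)
    \<le> card (adj_pairs (F - removed)) + card lost_tail_pairs + card lost_trace_pairs
       + card lost_crossing_pairs"
proof -
  have "finite (adj_pairs (F - removed) \<union> lost_tail_pairs \<union> lost_trace_pairs \<union> lost_crossing_pairs)"
    unfolding lost_tail_pairs_def lost_trace_pairs_def lost_crossing_pairs_def
      lost_crossing_moves_def
    using finite_adjacent_pairs finite_family finite_gstar_i finite_tail_pairs finite_trace_pairs
      finite_tails tailsD(2) by auto
  then have "card (adj_pairs F)
      \<le> card (adj_pairs (F - removed) \<union> lost_tail_pairs \<union> lost_trace_pairs \<union> lost_crossing_pairs)"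
    using adj_pairs_subset_lost by (rule card_mono)
  also have "\<dots> \<le> card (adj_pairs (F - removed)) + card lost_tail_pairs + card lost_trace_pairs
      + card lost_crossing_pairs"
    by (meson add_mono card_Un_le order.trans order.refl)
  finally show ?thesis .
qed

lemma int_card_gained_tail_pairs:
  "int (card gained_tail_pairs)
    = int (card (gstar_i g s i)) * ibinom (int n - int s) (int k - int i)
        * ibinom (int n - int s - int k + int i) 2"
proof -
  have le: "i - 1 \<le> k"
    and shift: "k - i + 1 = k - (i - 1)" "int k - int (i - 1) - 1 = int k - int i"
    "int n - int s - int k + int (i - 1) + 1 = int n - int s - int k + int i"
    using i_bounds by simp_all
  show ?thesis using int_card_tail_pairs[OF le] unfolding card_gained_tail_pairs shift by simp
qed

lemma int_card_gained_trace_pairs: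
  "int (card gained_trace_pairs)
    = int (card (trace_pairs i)) * ibinom (int n - int s) (int k - int i + 1)"
proof -
  have le: "i - 1 \<le> k"
    and shift: "k - i + 1 = k - (i - 1)" "int k - int (i - 1) = int k - int i + 1"
    using i_bounds by simp_all
  show ?thesis using int_card_tails[OF le] unfolding card_gained_trace_pairs shift by simp
qed

lemma int_card_gained_crossing_pairs:
  "int (card gained_crossing_pairs)
    = int (card (gstar_i g s i)) * (int s - int i + 1) * (int k - int i + 1)
        * ibinom (int n - int s) (int k - int i + 1)"
proof -
  have le: "i - 1 \<le> k"
    and shift: "k - i + 1 = k - (i - 1)" "int k - int (i - 1) = int k - int i + 1"
    "int (s - i + 1) = int s - int i + 1" "int (k - (i - 1)) = int k - int i + 1"
    using i_bounds by simp_all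
  show ?thesis
    using int_card_tails[OF le]
    unfolding card_gained_crossing_pairs card_gained_crossing_moves shift of_nat_mult by simp
qed

lemma gstar_j_bounds: "gstar_i g s j = {} \<or> j \<le> k \<and> j \<le> s"
  using gstar_i_card_bounds by blast

lemma int_card_lost_tail_pairs_le:
  "int (card lost_tail_pairs)
    \<le> int (card (gstar_i g s j)) * ibinom (int n - int s) (int k - int j - 1)
        * ibinom (int n - int s - int k + int j + 1) 2"
proof -
  have "int (card lost_tail_pairs) \<le> int (card (gstar_i g s j)) * int (card (tail_pairs (k - j)))"
    using card_lost_tail_pairs_le by (simp only: of_nat_le_iff flip: of_nat_mult)
  also have "\<dots> = int (card (gstar_i g s j)) * (ibinom (int n - int s) (int k - int j - 1)
      * ibinom (int n - int s - int k + int j + 1) 2)"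
    using gstar_j_bounds int_card_tail_pairs by auto
  finally show ?thesis by (simp only: mult.assoc)
qed

lemma int_card_lost_trace_pairs_le:
  "int (card lost_trace_pairs)
    \<le> int (card (trace_pairs j)) * ibinom (int n - int s) (int k - int j)"
proof -
  have "int (card lost_trace_pairs) \<le> int (card (trace_pairs j)) * int (card (tails (k - j)))"
    using card_lost_trace_pairs_le by (simp only: of_nat_le_iff flip: of_nat_mult)
  also have "\<dots> = int (card (trace_pairs j)) * ibinom (int n - int s) (int k - int j)"
  proof (cases "gstar_i g s j = {}")
    case True
    then have "trace_pairs j = {}" by (auto elim: trace_pairsE)
    then show ?thesis by simp
  next
    case False
    then show ?thesis using gstar_j_bounds int_card_tails by simp
  qed
  finally show ?thesis .
qed

lemma int_card_lost_crossing_pairs_le: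
  "int (card lost_crossing_pairs)
    \<le> int (card (gstar_i g s j)) * (int s - int j) * (int k - int j + 1)
        * ibinom (int n - int s) (int k - int j)"
proof -
  have "int (card lost_crossing_pairs)
      \<le> int (card (gstar_i g s j)) * (int (card (tails (k - j))) * (int (k - j + 1) * int (s - j)))"
    using card_lost_crossing_pairs_le by (simp only: of_nat_le_iff flip: of_nat_mult)
  also have "\<dots> = int (card (gstar_i g s j)) * (int s - int j) * (int k - int j + 1)
      * ibinom (int n - int s) (int k - int j)"
    using gstar_j_bounds int_card_tails by auto
  finally show ?thesis .
qed

lemma adj_pairs_difference_ge:
  "int (card (adj_pairs F\<^sub>1)) - int (card (adj_pairs F)) \<ge>
      int (card (gstar_i g s i)) * ibinom (int n - int s) (int k - int i)
          * ibinom (int n - int s - int k + int i) 2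
    + int (card (trace_pairs i)) * ibinom (int n - int s) (int k - int i + 1)
    + int (card (gstar_i g s i)) * (int s - int i + 1) * (int k - int i + 1)
          * ibinom (int n - int s) (int k - int i + 1)
    - int (card (gstar_i g s j)) * ibinom (int n - int s) (int k - int j - 1)
          * ibinom (int n - int s - int k + int j + 1) 2
    - int (card (trace_pairs j)) * ibinom (int n - int s) (int k - int j)
    - int (card (gstar_i g s j)) * (int s - int j) * (int k - int j + 1)
          * ibinom (int n - int s) (int k - int j)"
  using card_adj_pairs_F1_ge card_adj_pairs_F_le int_card_gained_tail_pairs
    int_card_gained_trace_pairs int_card_gained_crossing_pairs int_card_lost_tail_pairs_le
    int_card_lost_trace_pairs_le int_card_lost_crossing_pairs_le
  by linarith

end

lemma exchange_if_gen_sets_star: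
  assumes "F \<subseteq> kfam n k" "left_compressed n F" "g \<in> gen_sets_star n k F"
    "gstar_i g (splus_fam g) i \<noteq> {}" "i \<noteq> j"
  shows "exchange n k (splus_fam g) F g i j"
proof -
  have g: "upset_fam n g \<inter> kfam n k = F" "\<And>G. G \<in> g \<Longrightarrow> G \<subseteq> {1..n} \<and> card G \<le> k"
    "g = minimal_elems g"
    using assms(3) unfolding gen_sets_star_def gen_sets_def by auto
  have "g \<subseteq> Pow {1..n}" using g(2) by blast
  then have "finite g" by (rule finite_subset) simp
  then have "G \<subseteq> {1..splus_fam g}" if "G \<in> g" for G
    using that g(2)[OF that] mem_le_splus_fam[OF \<open>finite g\<close> that] finite_subset by fastforce
  moreover have "splus_fam g \<le> n" using \<open>finite g\<close> g(2) by (intro splus_fam_le) auto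
  moreover have "G' = G" if "G \<in> g" "G' \<in> g" "G' \<subseteq> G" for G G'
    using that g(3) unfolding minimal_elems_def by blast
  ultimately show ?thesis
    using assms g unfolding exchange_def exchange_axioms_def generated_family_def by blast
qed

theorem lemma3p2:
  fixes n k t i :: nat and F g :: "nat set set"
  assumes "F \<subseteq> kfam n k"
    and "left_compressed n F"
    and "t_intersecting t F"
    and "g \<in> gen_sets_star n k F"
    and "s = splus_fam g"
    and "gstar_i g s i \<noteq> {}"
    and "j = s + t - i"
    and "j \<noteq> i"
    and "F1 = (F \<union> Dfam n k (gstar_i' g s i)) - Dfam n k (gstar_i g s j)"
  shows "int (zeta (k - 1) F1 F1) - int (zeta (k - 1) F F) \<ge>
      int (card (gstar_i g s i)) * ibinom (int n - int s) (int k - int i)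
          * ibinom (int n - int s - int k + int i) 2
    + int (zeta_v (i - 1) s (gstar_i g s i) (restrict_fam F s)) * ibinom (int n - int s) (int k - int i + 1)
    + int (card (gstar_i g s i)) * (int s - int i + 1) * (int k - int i + 1)
          * ibinom (int n - int s) (int k - int i + 1)
    - int (card (gstar_i g s j)) * ibinom (int n - int s) (int k - int j - 1)
          * ibinom (int n - int s - int k + int j + 1) 2
    - int (zeta_v (j - 1) s (gstar_i g s j) (restrict_fam F s)) * ibinom (int n - int s) (int k - int j)
    - int (card (gstar_i g s j)) * (int s - int j) * (int k - int j + 1)
          * ibinom (int n - int s) (int k - int j)"
proof -
  interpret exchange n k s F g i j
    using exchange_if_gen_sets_star[OF assms(1,2,4)] assms(5,6,8) by simp
  have "F1 = F\<^sub>1" unfolding assms(9) F\<^sub>1_def removed_def ..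
  then show ?thesis
    using adj_pairs_difference_ge
    unfolding zeta_eq_card_adjacent_pairs zeta_v_eq_card_adjacent_pairs_at trace_pairs_def by simp
qed

end
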